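(* Let $k,n\ge1$, let $M=\Gamma(\mathbb Z\,\overrightarrow{\times}\,G,(k,0))$ with $G$ a Dedekind $\sigma$-complete $\ell$-group, let $x$ be an $n$-dimensional observable on $M$ and $F=F_x$. Let $i\in\{1,\ldots,k\}$, $\mathbf s\in T_i$, and $\mathbf t\in\mathbb R^n$ with $\pi_i(\mathbf s)\ll\mathbf t\le\mathbf s$. Then $\mathbf t\in T_i$ and $\mathbf t\approx_i\mathbf s$; moreover $\pi_i(\mathbf s)=\bigwedge\{\mathbf t\in\mathbb R^n\colon\pi_i(\mathbf s)\ll\mathbf t\le\mathbf s\}$ (componentwise infimum in $\mathbb R^n$), and the element $\bigwedge\{F(\mathbf t)\colon\pi_i(\mathbf s)\ll\mathbf t\le\mathbf s\}$ exists in $M$ and belongs to $M_i$.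
   Context: $\mathbb Z\,\overrightarrow{\times}\,G$ is $\mathbb Z\times G$ with lexicographic order; $\Gamma(K,v)=([0,v];\oplus,',0,v)$ with $a\oplus b=(a+b)\wedge v$, $a'=v-a$. Partial addition on $M$: $a+b$ defined iff the group sum is $\le(k,0)$. Summable sequence: every finite subfamily has a sum; its sum is the supremum of finite partial sums. An $n$-dimensional observable is $x:\mathcal B(\mathbb R^n)\to M$ with $x(\mathbb R^n)=1$ and $x(\bigcup A_m)=\sum_m x(A_m)$ (summable) for pairwise disjoint Borel $A_m$. $F_x(s_1,\ldots,s_n)=x((-\infty,s_1)\times\cdots\times(-\infty,s_n))$. $M_j=\{(j,g)\in M\}$, $T_j=\{\mathbf s\colon F(\mathbf s)\in M_j\}$. For $\mathbf s\in T_i$ ($i\ge1$), $\pi^i_j(\mathbf s)=\inf\{r\colon(s_1,\ldots,s_{j-1},r,s_{j+1},\ldots,s_n)\in T_i\}$, $\pi_i(\mathbf s)=(\pi^i_1(\mathbf s),\ldots,\pi^i_n(\mathbf s))$ (characteristic point associated to $\mathbf s$). For $\mathbf s,\mathbf t\in T_i$, $\mathbf s\approx_i\mathbf t$ iff $\pi_i(\mathbf s)=\pi_i(\mathbf t)$. $\mathbf a\le\mathbf b$ means $a_j\le b_j$ for all $j$; $\mathbf a\ll\mathbf b$ means $a_j<b_j$ for all $j$. *)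

theory Defs
  imports "HOL-Analysis.Analysis" "HOL-Library.Lattice_Algebras"
begin

definition lexle :: "int \<times> 'g::ord \<Rightarrow> int \<times> 'g \<Rightarrow> bool" where
  "lexle a b \<longleftrightarrow> fst a < fst b \<or> (fst a = fst b \<and> snd a \<le> snd b)"

definition Gamma :: "int \<Rightarrow> (int \<times> 'g::{ord,zero}) set" where
  "Gamma k = {a. lexle (0,0) a \<and> lexle a (k,0)}"

definition lex_sup_in :: "(int \<times> 'g::ord) set \<Rightarrow> (int \<times> 'g) set \<Rightarrow> int \<times> 'g \<Rightarrow> bool" where
  "lex_sup_in M S s \<longleftrightarrow> s \<in> M \<and> (\<forall>a\<in>S. lexle a s) \<and>
      (\<forall>u\<in>M. (\<forall>a\<in>S. lexle a u) \<longrightarrow> lexle s u)"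

definition lex_inf_in :: "(int \<times> 'g::ord) set \<Rightarrow> (int \<times> 'g) set \<Rightarrow> int \<times> 'g \<Rightarrow> bool" where
  "lex_inf_in M S s \<longleftrightarrow> s \<in> M \<and> (\<forall>a\<in>S. lexle s a) \<and>
      (\<forall>u\<in>M. (\<forall>a\<in>S. lexle u a) \<longrightarrow> lexle u s)"

definition dedekind_sigma_complete :: "'g::lattice_ab_group_add itself \<Rightarrow> bool" where
  "dedekind_sigma_complete _ \<longleftrightarrow>
     (\<forall>S::'g set. S \<noteq> {} \<and> countable S \<and> bdd_above S \<longrightarrow>
        (\<exists>s. (\<forall>a\<in>S. a \<le> s) \<and> (\<forall>u. (\<forall>a\<in>S. a \<le> u) \<longrightarrow> s \<le> u)))"

definition psum :: "(nat \<Rightarrow> int \<times> 'g::comm_monoid_add) \<Rightarrow> nat set \<Rightarrow> int \<times> 'g" where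
  "psum a F = (\<Sum>i\<in>F. fst (a i), \<Sum>i\<in>F. snd (a i))"

(* summable in M: every finite subfamily has a sum in M (partial addition) *)
definition M_summable :: "int \<Rightarrow> (nat \<Rightarrow> int \<times> 'g::{comm_monoid_add,ord}) \<Rightarrow> bool" where
  "M_summable k a \<longleftrightarrow> (\<forall>F. finite F \<longrightarrow> psum a F \<in> Gamma k)"

definition M_sum_is :: "int \<Rightarrow> (nat \<Rightarrow> int \<times> 'g::{comm_monoid_add,ord}) \<Rightarrow> int \<times> 'g \<Rightarrow> bool" where
  "M_sum_is k a s \<longleftrightarrow> lex_sup_in (Gamma k) {psum a F | F. finite F} s"

(* n-dimensional observable on M = Gamma(Z lex G,(k,0)); n = CARD('n) *)
definition observable :: "int \<Rightarrow> ((real^'n) set \<Rightarrow> int \<times> 'g::lattice_ab_group_add) \<Rightarrow> bool" where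
  "observable k x \<longleftrightarrow>
     (\<forall>A\<in>sets borel. x A \<in> Gamma k) \<and>
     x UNIV = (k, 0) \<and>
     (\<forall>A::nat \<Rightarrow> (real^'n) set. range A \<subseteq> sets borel \<and> disjoint_family A \<longrightarrow>
        M_summable k (x \<circ> A) \<and> M_sum_is k (x \<circ> A) (x (\<Union>m. A m)))"

definition distrF :: "((real^'n) set \<Rightarrow> 'b) \<Rightarrow> real^'n \<Rightarrow> 'b" where
  "distrF x s = x {y. \<forall>j. y $ j < s $ j}"

definition Mset :: "int \<Rightarrow> int \<Rightarrow> (int \<times> 'g::{ord,zero}) set" where
  "Mset k j = {a \<in> Gamma k. fst a = j}"

definition Tset :: "int \<Rightarrow> ((real^'n) set \<Rightarrow> int \<times> 'g::{ord,zero}) \<Rightarrow> int \<Rightarrow> (real^'n) set" where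
  "Tset k x j = {s. distrF x s \<in> Mset k j}"

definition pi_comp :: "int \<Rightarrow> ((real^'n) set \<Rightarrow> int \<times> 'g::{ord,zero}) \<Rightarrow> int \<Rightarrow> real^'n \<Rightarrow> 'n \<Rightarrow> real" where
  "pi_comp k x i s j = Inf {r. (\<chi> l. if l = j then r else s $ l) \<in> Tset k x i}"

definition char_point :: "int \<Rightarrow> ((real^'n) set \<Rightarrow> int \<times> 'g::{ord,zero}) \<Rightarrow> int \<Rightarrow> real^'n \<Rightarrow> real^'n" where
  "char_point k x i s = (\<chi> j. pi_comp k x i s j)"

definition approx_i :: "int \<Rightarrow> ((real^'n) set \<Rightarrow> int \<times> 'g::{ord,zero}) \<Rightarrow> int \<Rightarrow> real^'n \<Rightarrow> real^'n \<Rightarrow> bool" where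
  "approx_i k x i s t \<longleftrightarrow> s \<in> Tset k x i \<and> t \<in> Tset k x i \<and> char_point k x i s = char_point k x i t"

definition vle :: "real^'n \<Rightarrow> real^'n \<Rightarrow> bool" where
  "vle a b \<longleftrightarrow> (\<forall>j. a $ j \<le> b $ j)"

definition vll :: "real^'n \<Rightarrow> real^'n \<Rightarrow> bool" where
  "vll a b \<longleftrightarrow> (\<forall>j. a $ j < b $ j)"

definition is_vinf :: "(real^'n) set \<Rightarrow> real^'n \<Rightarrow> bool" where
  "is_vinf S p \<longleftrightarrow> (\<forall>t\<in>S. vle p t) \<and> (\<forall>q. (\<forall>t\<in>S. vle q t) \<longrightarrow> vle q p)"

end

theory Submission
  imports Defs
begin

text \<open>
  Only the integer part \<open>fst \<circ> x\<close> of the observable decides membership in \<open>T\<^sub>i\<close>, and it behaves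
  like an integer-valued measure: in the lexicographic group the partial sums of a summable family
  must reach the integer part of their supremum after finitely many terms, since otherwise the
  supremum could be lowered inside its own level. Hence \<open>x\<close> is continuous along decreasing
  sequences, as an infimum in \<open>M\<close> and eventually in the integer part.

  For \<open>\<pi>\<^sub>i(s) \<lless> t \<le> s\<close>, replacing one coordinate of \<open>s\<close> by that of \<open>t\<close> stays in \<open>T\<^sub>i\<close> by the
  definition of \<open>\<pi>\<^sub>i\<close>; so the open orthant below \<open>s\<close> minus the one below \<open>t\<close> is a finite union of
  integer-null sets. This gives \<open>t \<in> T\<^sub>i\<close>, and, comparing the coordinate lines through \<open>s\<close> and \<open>t\<close>
  below \<open>t\<close>, also \<open>\<pi>\<^sub>i(t) = \<pi>\<^sub>i(s)\<close>. Finally the open orthants below points \<open>u\<^sub>m \<down> \<pi>\<^sub>i(s)\<close> decrease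
  to the closed orthant below \<open>\<pi>\<^sub>i(s)\<close>, whose value is the required infimum and lies in \<open>M\<^sub>i\<close>.
\<close>

lemma psum_eq_sum: "psum a F = sum a F"
  by (simp add: psum_def prod_eq_iff fst_sum snd_sum)

lemma lexle_refl [simp]: "lexle a (a :: int \<times> 'g::order)"
  by (simp add: lexle_def)

lemma lexle_trans: "lexle a b \<Longrightarrow> lexle b c \<Longrightarrow> lexle a (c :: int \<times> 'g::order)"
  by (auto simp: lexle_def)

lemma lexle_antisym: "lexle a b \<Longrightarrow> lexle b a \<Longrightarrow> a = (b :: int \<times> 'g::order)"
  by (auto simp: lexle_def prod_eq_iff)

lemma lexle_fst: "lexle a b \<Longrightarrow> fst a \<le> fst b"
  by (auto simp: lexle_def)

lemma lexle_add_mono: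
  "lexle a b \<Longrightarrow> lexle c d \<Longrightarrow> lexle (a + c) (b + (d :: int \<times> 'g::ordered_ab_group_add))"
  by (auto simp: lexle_def add_mono)

lemma lexle_diff_left_iff:
  "lexle (c - a) (c - b) \<longleftrightarrow> lexle b (a :: int \<times> 'g::ordered_ab_group_add)"
  by (auto simp: lexle_def)

lemma lexle_sum_nonneg:
  fixes a :: "'i \<Rightarrow> int \<times> 'g::ordered_ab_group_add"
  shows "(\<And>l. l \<in> F \<Longrightarrow> lexle 0 (a l)) \<Longrightarrow> lexle 0 (sum a F)"
proof (induction F rule: infinite_finite_induct)
  case (insert l F)
  then show ?case using lexle_add_mono[of 0 "a l" 0 "sum a F"] by simp
qed simp_all

lemma lexle_sum_mono:
  fixes a :: "'i \<Rightarrow> int \<times> 'g::ordered_ab_group_add"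
  assumes "finite G" "F \<subseteq> G" "\<And>l. l \<in> G \<Longrightarrow> lexle 0 (a l)"
  shows "lexle (sum a F) (sum a G)"
proof -
  have "lexle 0 (sum a (G - F))"
    using assms(3) by (intro lexle_sum_nonneg) auto
  then show ?thesis
    using lexle_add_mono[of 0 "sum a (G - F)" "sum a F" "sum a F"]
    by (simp add: sum.subset_diff[OF assms(2,1)])
qed

lemma Gamma_iff: "a \<in> Gamma k \<longleftrightarrow> lexle 0 a \<and> lexle a (k, 0)"
  by (simp add: Gamma_def zero_prod_def)

lemma lex_sup_in_max:
  "lex_sup_in M S s \<Longrightarrow> m \<in> S \<Longrightarrow> m \<in> M \<Longrightarrow> \<forall>a\<in>S. lexle a m \<Longrightarrow> s = (m :: int \<times> 'g::order)"
  unfolding lex_sup_in_def by (meson lexle_antisym)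

lemma lex_sup_in_cofinal:
  fixes A B :: "(int \<times> 'g::order) set"
  assumes "\<forall>a\<in>A. \<exists>b\<in>B. lexle a b" and "\<forall>b\<in>B. \<exists>a\<in>A. lexle b a"
  shows "lex_sup_in M A s \<longleftrightarrow> lex_sup_in M B s"
  using assms unfolding lex_sup_in_def by (meson lexle_trans)

lemma lattice_ab_group_add_trivial:
  fixes g :: "'g::lattice_ab_group_add"
  assumes "\<forall>d::'g. \<not> 0 < d"
  shows "g = 0"
proof -
  have nonpos: "h \<le> 0" for h :: 'g
  proof -
    have "sup h 0 = 0"
      using assms sup_ge2[of 0 h] by (auto simp: order.strict_iff_order)
    then show ?thesis by (metis sup_ge1)
  qed
  show ?thesis using nonpos[of g] nonpos[of "- g"] by simp
qed

text \<open>
  If all \<open>fst a\<close> stayed below \<open>fst S\<close>, a smaller upper bound would exist in \<open>Gamma k\<close>: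
  \<open>S\<close> lowered within its level by a positive element of \<open>G\<close>, or, when \<open>G\<close> is trivial, the level below.
\<close>

lemma lex_sup_in_Gamma_fst_attained:
  fixes A :: "(int \<times> 'g::lattice_ab_group_add) set"
  assumes "A \<subseteq> Gamma k" "A \<noteq> {}" and sup: "lex_sup_in (Gamma k) A S"
  shows "\<exists>a\<in>A. fst a = fst S"
proof (rule ccontr)
  assume "\<not> (\<exists>a\<in>A. fst a = fst S)"
  moreover have "fst a \<le> fst S" if "a \<in> A" for a
    using sup that by (auto simp: lex_sup_in_def dest: lexle_fst)
  ultimately have below: "fst a < fst S" if "a \<in> A" for a
    using that by fastforce
  have S_pos: "0 < fst S"
    using assms(1,2) below by (fastforce simp: Gamma_iff lexle_def)
  have S_le: "lexle S (k, 0)"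
    using sup by (simp add: lex_sup_in_def Gamma_iff)
  obtain U where "U \<in> Gamma k" "\<forall>a\<in>A. lexle a U" "\<not> lexle S U"
  proof (cases "\<exists>d::'g. 0 < d")
    case True
    then obtain d :: 'g where d: "0 < d" by blast
    have "snd S - d \<le> snd S" "\<not> snd S \<le> snd S - d"
      using d by (simp_all add: le_diff_eq)
    then have "(fst S, snd S - d) \<in> Gamma k"
      using S_pos S_le by (auto simp: Gamma_iff lexle_def intro: order_trans)
    then show ?thesis
      using that below \<open>\<not> snd S \<le> snd S - d\<close> by (simp add: lexle_def)
  next
    case False
    then have "snd a = 0" for a :: "int \<times> 'g"
      using lattice_ab_group_add_trivial by blast
    moreover have "fst a \<le> fst S - 1" if "a \<in> A" for a
      using below[OF that] by simp
    ultimately have "(fst S - 1, 0::'g) \<in> Gamma k" "\<forall>a\<in>A. lexle a (fst S - 1, 0)"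
      using S_pos S_le by (auto simp: Gamma_iff lexle_def order.order_iff_strict)
    then show ?thesis
      using that by (simp add: lexle_def)
  qed
  then show False
    using sup by (auto simp: lex_sup_in_def)
qed

lemma lex_sup_in_Gamma_fst_eventually:
  fixes P :: "nat \<Rightarrow> int \<times> 'g::lattice_ab_group_add"
  assumes mono: "\<And>m m'. m \<le> m' \<Longrightarrow> lexle (P m) (P m')"
    and "\<And>m. P m \<in> Gamma k"
    and sup: "lex_sup_in (Gamma k) (range P) S"
  shows "\<exists>N. \<forall>m\<ge>N. fst (P m) = fst S"
proof -
  obtain N where "fst (P N) = fst S"
    using lex_sup_in_Gamma_fst_attained[OF _ _ sup] assms(2) by blast
  moreover have "fst (P m) \<le> fst S" for m
    using sup by (auto simp: lex_sup_in_def dest: lexle_fst)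
  ultimately have "\<forall>m\<ge>N. fst (P m) = fst S"
    using lexle_fst[OF mono] by (metis antisym)
  then show ?thesis by blast
qed

lemma Inf_real_Int_atMost:
  fixes A :: "real set"
  assumes "c \<in> A"
  shows "Inf A = Inf (A \<inter> {..c})"
proof (cases "bdd_below A")
  case True
  then have bdd: "bdd_below (A \<inter> {..c})"
    by (meson bdd_below_Int1)
  have "Inf (A \<inter> {..c}) \<le> a" if "a \<in> A" for a
  proof (cases "a \<le> c")
    case True
    then show ?thesis using that bdd by (intro cInf_lower) auto
  next
    case False
    have "Inf (A \<inter> {..c}) \<le> c" using assms bdd by (intro cInf_lower) auto
    then show ?thesis using False by simp
  qed
  then show ?thesis
    using assms True by (intro antisym cInf_greatest cInf_superset_mono) auto
next
  case False
  \<comment> \<open>On reals unbounded below, \<open>Inf\<close> is one and the same unspecified value.\<close>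
  have junk: "Inf X = - (LEAST z::real. False)" if "\<not> bdd_below X" for X :: "real set"
  proof -
    have "(\<lambda>z. \<forall>y\<in>uminus ` X. y \<le> z) = (\<lambda>z. False)"
      using that by (auto simp: bdd_below_def fun_eq_iff) (metis minus_le_iff)
    then show ?thesis
      by (simp only: Inf_real_def Sup_real_def)
  qed
  have "\<not> bdd_below (A \<inter> {..c})"
    using False unfolding bdd_below_def by (meson IntI atMost_iff min.cobounded1 min.cobounded2 nle_le order_trans)
  then show ?thesis
    using junk False by simp
qed

definition lower_orthant :: "real^'n \<Rightarrow> (real^'n) set" where
  "lower_orthant v = {y. \<forall>j. y $ j < v $ j}"

definition vec_upd :: "real^'n \<Rightarrow> 'n \<Rightarrow> real \<Rightarrow> real^'n" where
  "vec_upd v j r = (\<chi> l. if l = j then r else v $ l)"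

lemma vec_upd_nth [simp]: "vec_upd v j r $ l = (if l = j then r else v $ l)"
  by (simp add: vec_upd_def)

lemma vec_upd_same [simp]: "vec_upd v j (v $ j) = v"
  by (simp add: vec_eq_iff)

lemma distrF_eq_lower_orthant: "distrF x v = x (lower_orthant v)"
  by (simp add: distrF_def lower_orthant_def)

lemma lower_orthant_borel [simp]: "lower_orthant v \<in> sets borel"
proof -
  have "lower_orthant v = (\<Inter>j. {y. y $ j < v $ j})"
    by (auto simp: lower_orthant_def)
  then show ?thesis
    by (simp add: open_INT open_halfspace_component_lt_cart)
qed

lemma lower_orthant_mono: "vle u v \<Longrightarrow> lower_orthant u \<subseteq> lower_orthant v"
  unfolding lower_orthant_def vle_def using less_le_trans by blast

lemma lower_orthant_Diff:
  "lower_orthant s - lower_orthant t = (\<Union>l. lower_orthant s - lower_orthant (vec_upd s l (t $ l)))"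
  by (auto simp: lower_orthant_def)

lemma atMost_subset_lower_orthant: "vll p v \<Longrightarrow> {..p} \<subseteq> lower_orthant v"
  unfolding lower_orthant_def vll_def by (auto simp: less_eq_vec_def) (meson le_less_trans)

lemma lower_orthants_decreasing_to_atMost:
  fixes p t :: "real^'n"
  assumes "vll p t"
  obtains u where "\<And>m. vll p (u m)" "\<And>m. vle (u m) t"
    and "decseq (\<lambda>m. lower_orthant (u m))" "(\<Inter>m. lower_orthant (u m)) = {..p}"
proof
  define u where "u m = (\<chi> j. p $ j + (t $ j - p $ j) / (real m + 1))" for m :: nat
  have tp: "0 < t $ j - p $ j" for j
    using assms by (simp add: vll_def)
  show pu: "vll p (u m)" for m
    using tp by (simp add: vll_def u_def)
  have "(t $ j - p $ j) / (real m + 1) \<le> t $ j - p $ j" for j m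
    using tp[of j] by (simp add: divide_le_eq)
  then show "vle (u m) t" for m
    by (simp add: vle_def u_def algebra_simps)
  have "(t $ j - p $ j) / (real (Suc m) + 1) \<le> (t $ j - p $ j) / (real m + 1)" for j m
    using tp[of j] by (intro divide_left_mono) auto
  then show "decseq (\<lambda>m. lower_orthant (u m))"
    by (intro decseq_SucI lower_orthant_mono) (simp add: vle_def u_def)
  show "(\<Inter>m. lower_orthant (u m)) = {..p}"
  proof (intro antisym subsetI)
    fix y assume y: "y \<in> (\<Inter>m. lower_orthant (u m))"
    have "y $ j \<le> p $ j" for j
    proof (rule ccontr)
      assume "\<not> y $ j \<le> p $ j"
      then have pos: "0 < y $ j - p $ j"
        by simp
      obtain m :: nat where "(t $ j - p $ j) / (y $ j - p $ j) < real m"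
        using reals_Archimedean2 by blast
      then have "(t $ j - p $ j) / (real m + 1) < y $ j - p $ j"
        using pos tp[of j] by (simp add: field_simps)
      moreover have "y $ j < u m $ j"
        using y by (auto simp: lower_orthant_def)
      ultimately show False
        by (simp add: u_def)
    qed
    then show "y \<in> {..p}"
      by (simp add: less_eq_vec_def)
  qed (use pu atMost_subset_lower_orthant in blast)
qed

lemma lower_orthant_vec_upd_Diff_subset:
  assumes "r \<le> s $ j"
  shows "lower_orthant (vec_upd s j r) - lower_orthant (vec_upd t j r) \<subseteq> lower_orthant s - lower_orthant t"
proof
  fix y assume y: "y \<in> lower_orthant (vec_upd s j r) - lower_orthant (vec_upd t j r)"
  then have "y $ l < s $ l" for l
    using assms unfolding lower_orthant_def by (metis (mono_tags) DiffD1 mem_Collect_eq order_less_le_trans order_refl vec_upd_nth)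
  moreover obtain l where "\<not> y $ l < vec_upd t j r $ l"
    using y by (auto simp: lower_orthant_def)
  moreover have "y $ j < r"
    using y by (auto simp: lower_orthant_def dest: spec[of _ j])
  ultimately show "y \<in> lower_orthant s - lower_orthant t"
    by (auto simp: lower_orthant_def split: if_splits)
qed

lemma is_vinf_box:
  fixes p t s :: "real^'n"
  assumes "vll p t" "vle t s"
  shows "is_vinf {u. vll p u \<and> vle u s} p"
  unfolding is_vinf_def
proof safe
  show "vle p u" if "vll p u" for u
    using that by (auto simp: vll_def vle_def less_imp_le)
next
  fix q assume q: "\<forall>u\<in>{u. vll p u \<and> vle u s}. vle q u"
  show "vle q p"
    unfolding vle_def
  proof (rule ccontr)
    assume "\<not> (\<forall>j. q $ j \<le> p $ j)"
    then obtain j where "p $ j < q $ j"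
      by (auto simp: not_le)
    then obtain c where c: "p $ j < c" "c < q $ j" "c < t $ j"
      using assms(1) dense[of "p $ j" "min (q $ j) (t $ j)"] by (auto simp: vll_def)
    moreover have "c \<le> s $ j"
      using c(3) assms(2) unfolding vle_def by (meson less_imp_le order_trans)
    ultimately have "vll p (vec_upd t j c)" "vle (vec_upd t j c) s"
      using assms by (auto simp: vll_def vle_def)
    then have "vle q (vec_upd t j c)"
      using q by blast
    then have "q $ j \<le> c"
      unfolding vle_def by (metis vec_upd_nth)
    then show False
      using c by simp
  qed
qed

locale lex_observable =
  fixes k :: int and x :: "(real^'n) set \<Rightarrow> int \<times> 'g::lattice_ab_group_add"
  assumes observable: "observable k x"
begin

lemma x_in_Gamma: "A \<in> sets borel \<Longrightarrow> x A \<in> Gamma k"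
  using observable by (simp add: observable_def)

lemma x_nonneg: "A \<in> sets borel \<Longrightarrow> lexle 0 (x A)"
  using x_in_Gamma by (simp add: Gamma_iff)

lemma x_countably_additive:
  assumes "range A \<subseteq> sets borel" "disjoint_family A"
  shows "M_summable k (x \<circ> A)" "M_sum_is k (x \<circ> A) (x (\<Union>m. A m))"
  using observable assms by (simp_all add: observable_def)

lemma x_empty [simp]: "x {} = 0"
proof -
  have "lex_sup_in (Gamma k) {psum (\<lambda>_. x {}) F | F. finite F} (x {})"
    using x_countably_additive(2)[of "\<lambda>_. {}"] by (simp add: M_sum_is_def o_def disjoint_family_on_def)
  moreover have "psum (\<lambda>_. x {}) {0, 1} \<in> {psum (\<lambda>_. x {}) F | F. finite F}"
    by blast
  ultimately have "lexle (psum (\<lambda>_. x {}) {0, 1 :: nat}) (x {})"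
    unfolding lex_sup_in_def by blast
  then have "lexle (x {}) 0"
    by (simp add: psum_eq_sum lexle_def)
  then show ?thesis
    using x_nonneg[of "{}"] lexle_antisym by blast
qed

lemma x_Un:
  assumes "A \<in> sets borel" "B \<in> sets borel" "A \<inter> B = {}"
  shows "x (A \<union> B) = x A + x B"
proof -
  define f :: "nat \<Rightarrow> (real^'n) set" where "f m = (if m = 0 then A else if m = 1 then B else {})" for m
  have borel: "range f \<subseteq> sets borel" and disj: "disjoint_family f"
    using assms by (auto simp: f_def disjoint_family_on_def)
  have "f 0 = A" "f 1 = B" "\<And>m. f m \<subseteq> A \<union> B"
    by (auto simp: f_def)
  then have "(\<Union>m. f m) = A \<union> B"
    by blast
  then have sup: "lex_sup_in (Gamma k) {psum (x \<circ> f) F | F. finite F} (x (A \<union> B))"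
    using x_countably_additive(2)[OF borel disj] by (simp add: M_sum_is_def)
  have pair: "psum (x \<circ> f) {0, 1} = x A + x B"
    by (simp add: psum_eq_sum f_def)
  show ?thesis
  proof (rule lex_sup_in_max[OF sup])
    show "x A + x B \<in> {psum (x \<circ> f) F | F. finite F}"
      using pair by (metis (mono_tags) finite.emptyI finite.insertI mem_Collect_eq)
    then show "x A + x B \<in> Gamma k"
      using x_countably_additive(1)[OF borel disj] by (auto simp: M_summable_def)
    show "\<forall>a\<in>{psum (x \<circ> f) F | F. finite F}. lexle a (x A + x B)"
    proof
      fix a assume "a \<in> {psum (x \<circ> f) F | F. finite F}"
      then obtain F where "finite F" "a = psum (x \<circ> f) F" by blast
      then have "lexle (sum (x \<circ> f) F) (sum (x \<circ> f) (F \<union> {0, 1}))"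
        using borel x_nonneg by (intro lexle_sum_mono) auto
      also have "sum (x \<circ> f) (F \<union> {0, 1}) = sum (x \<circ> f) {0, 1}"
        using \<open>finite F\<close> by (intro sum.mono_neutral_right) (auto simp: f_def)
      finally show "lexle a (x A + x B)"
        using pair \<open>a = psum (x \<circ> f) F\<close> by (simp add: psum_eq_sum)
    qed
  qed
qed

lemma x_Diff:
  assumes "A \<subseteq> B" "A \<in> sets borel" "B \<in> sets borel"
  shows "x B = x A + x (B - A)"
  using x_Un[of A "B - A"] assms by (simp add: Un_absorb1 sets.Diff)

lemma x_mono:
  assumes "A \<subseteq> B" "A \<in> sets borel" "B \<in> sets borel"
  shows "lexle (x A) (x B)"
  using x_Diff[OF assms] x_nonneg[of "B - A"] lexle_add_mono[of "x A" "x A" 0 "x (B - A)"] assms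
  by (simp add: sets.Diff)

lemma fst_x_nonneg: "A \<in> sets borel \<Longrightarrow> 0 \<le> fst (x A)"
  using lexle_fst[OF x_nonneg] by simp

lemma fst_x_mono: "A \<subseteq> B \<Longrightarrow> A \<in> sets borel \<Longrightarrow> B \<in> sets borel \<Longrightarrow> fst (x A) \<le> fst (x B)"
  using lexle_fst[OF x_mono] by blast

lemma fst_x_Diff:
  "A \<subseteq> B \<Longrightarrow> A \<in> sets borel \<Longrightarrow> B \<in> sets borel \<Longrightarrow> fst (x (B - A)) = fst (x B) - fst (x A)"
  using x_Diff[of A B] by simp

lemma fst_x_null_subset:
  "A \<subseteq> B \<Longrightarrow> A \<in> sets borel \<Longrightarrow> B \<in> sets borel \<Longrightarrow> fst (x B) = 0 \<Longrightarrow> fst (x A) = 0"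
  using fst_x_mono fst_x_nonneg by (metis antisym)

lemma fst_x_null_UN:
  assumes "finite J" "\<And>j. j \<in> J \<Longrightarrow> N j \<in> sets borel" "\<And>j. j \<in> J \<Longrightarrow> fst (x (N j)) = 0"
  shows "fst (x (\<Union>j\<in>J. N j)) = 0"
  using assms
proof (induction J rule: finite_induct)
  case (insert j J)
  let ?U = "\<Union>j\<in>J. N j"
  have U_borel: "?U \<in> sets borel"
    using insert.hyps(1) insert.prems(1) by (intro sets.finite_UN) auto
  have Nj: "N j \<in> sets borel" "fst (x (N j)) = 0"
    using insert.prems by auto
  have "fst (x (N j - ?U)) = 0"
    using Nj U_borel fst_x_null_subset[of "N j - ?U" "N j"] by (simp add: sets.Diff)
  moreover have "fst (x ?U) = 0"
    using insert.IH insert.prems by simp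
  moreover have "(\<Union>j\<in>insert j J. N j) = ?U \<union> (N j - ?U)"
    by auto
  moreover have "x (?U \<union> (N j - ?U)) = x ?U + x (N j - ?U)"
    using Nj U_borel x_Un[of ?U "N j - ?U"] by (simp add: sets.Diff Int_Diff)
  ultimately show ?case
    by simp
qed simp

lemma x_UN_lessThan:
  fixes E :: "nat \<Rightarrow> (real^'n) set"
  assumes "range E \<subseteq> sets borel" "disjoint_family E"
  shows "x (\<Union>i<n. E i) = (\<Sum>i<n. x (E i))"
proof (induction n)
  case (Suc n)
  have borel: "(\<Union>i<n. E i) \<in> sets borel" "E n \<in> sets borel"
    using assms(1) by blast+
  have "E i \<inter> E n = {}" if "i < n" for i
    using disjoint_family_onD[OF assms(2)] that by simp
  then have "(\<Union>i<n. E i) \<inter> E n = {}"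
    by blast
  then have "x ((\<Union>i<n. E i) \<union> E n) = x (\<Union>i<n. E i) + x (E n)"
    using borel by (rule x_Un[rotated 2])
  moreover have "(\<Union>i<Suc n. E i) = (\<Union>i<n. E i) \<union> E n"
    by (auto simp: lessThan_Suc)
  ultimately show ?case
    using Suc.IH by simp
qed simp

lemma x_incseq_Sup:
  assumes borel: "range A \<subseteq> sets borel" and inc: "incseq A"
  shows "lex_sup_in (Gamma k) (range (\<lambda>m. x (A m))) (x (\<Union>m. A m))"
proof -
  let ?E = "disjointed A"
  have E_borel: "range ?E \<subseteq> sets borel"
    using borel by (rule sets.range_disjointed_sets)
  have partial: "x (A m) = sum (x \<circ> ?E) {..<Suc m}" for m
  proof -
    have "A i \<subseteq> A m" if "i < Suc m" for i
      using incseqD[OF inc] that by simp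
    then have "(\<Union>i<Suc m. A i) = A m"
      by blast
    then have "A m = (\<Union>i<Suc m. ?E i)"
      using finite_UN_disjointed_eq[of A "Suc m"] by (simp add: atLeast0LessThan)
    also have "x \<dots> = sum (x \<circ> ?E) {..<Suc m}"
      unfolding comp_def by (rule x_UN_lessThan[OF E_borel disjoint_family_disjointed])
    finally show ?thesis .
  qed
  have "lex_sup_in (Gamma k) {psum (x \<circ> ?E) F | F. finite F} (x (\<Union>m. A m))"
    using x_countably_additive(2)[OF E_borel disjoint_family_disjointed]
    by (simp add: M_sum_is_def UN_disjointed_eq)
  moreover have "\<forall>a\<in>{psum (x \<circ> ?E) F | F. finite F}. \<exists>b\<in>range (\<lambda>m. x (A m)). lexle a b"
  proof
    fix a assume "a \<in> {psum (x \<circ> ?E) F | F. finite F}"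
    then obtain F where F: "finite F" "a = sum (x \<circ> ?E) F"
      by (auto simp: psum_eq_sum)
    then obtain m where "F \<subseteq> {..<Suc m}"
      using finite_nat_bounded[of F] by (auto simp: lessThan_Suc)
    then have "lexle (sum (x \<circ> ?E) F) (sum (x \<circ> ?E) {..<Suc m})"
      using E_borel x_nonneg by (intro lexle_sum_mono) auto
    then have "lexle a (x (A m))"
      by (simp only: F(2) partial)
    then show "\<exists>b\<in>range (\<lambda>m. x (A m)). lexle a b"
      by blast
  qed
  moreover have "\<forall>b\<in>range (\<lambda>m. x (A m)). \<exists>a\<in>{psum (x \<circ> ?E) F | F. finite F}. lexle b a"
  proof
    fix b assume "b \<in> range (\<lambda>m. x (A m))"
    then obtain m where "b = psum (x \<circ> ?E) {..<Suc m}"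
      using partial by (auto simp: psum_eq_sum)
    then show "\<exists>a\<in>{psum (x \<circ> ?E) F | F. finite F}. lexle b a"
      using lexle_refl by blast
  qed
  ultimately show ?thesis
    using lex_sup_in_cofinal by blast
qed

lemma fst_x_incseq_eventually:
  assumes "range A \<subseteq> sets borel" "incseq A"
  shows "\<exists>N. \<forall>m\<ge>N. fst (x (A m)) = fst (x (\<Union>m. A m))"
proof (rule lex_sup_in_Gamma_fst_eventually[OF _ _ x_incseq_Sup[OF assms]])
  show "lexle (x (A m)) (x (A m'))" if "m \<le> m'" for m m'
    using assms incseqD[OF assms(2) that] by (intro x_mono) auto
  show "x (A m) \<in> Gamma k" for m
    using assms by (intro x_in_Gamma) auto
qed

lemma x_decseq_split:
  assumes borel: "range B \<subseteq> sets borel" and dec: "decseq B"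
  shows "range (\<lambda>m. B 0 - B m) \<subseteq> sets borel" "incseq (\<lambda>m. B 0 - B m)"
    and "x (B 0) = x (B m) + x (B 0 - B m)"
    and "x (B 0) = x (\<Inter>m. B m) + x (\<Union>m. B 0 - B m)"
proof -
  show "range (\<lambda>m. B 0 - B m) \<subseteq> sets borel" "incseq (\<lambda>m. B 0 - B m)"
    using borel decseqD[OF dec] by (auto simp: incseq_def)
  show "x (B 0) = x (B m) + x (B 0 - B m)"
    using borel decseqD[OF dec, of 0 m] by (intro x_Diff) auto
  have "x (B 0) = x (\<Inter>m. B m) + x (B 0 - (\<Inter>m. B m))"
    using borel by (intro x_Diff) auto
  moreover have "(\<Union>m. B 0 - B m) = B 0 - (\<Inter>m. B m)"
    by auto
  ultimately show "x (B 0) = x (\<Inter>m. B m) + x (\<Union>m. B 0 - B m)"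
    by simp
qed

lemma x_decseq_Inf:
  assumes borel: "range B \<subseteq> sets borel" and dec: "decseq B"
  shows "lex_inf_in (Gamma k) (range (\<lambda>m. x (B m))) (x (\<Inter>m. B m))"
  unfolding lex_inf_in_def
proof (intro conjI ballI impI)
  have Inter_borel: "(\<Inter>m. B m) \<in> sets borel"
    using borel by auto
  then show "x (\<Inter>m. B m) \<in> Gamma k"
    by (rule x_in_Gamma)
  show "lexle (x (\<Inter>m. B m)) a" if "a \<in> range (\<lambda>m. x (B m))" for a
    using that Inter_borel borel by (auto intro!: x_mono)
next
  fix w assume w: "w \<in> Gamma k" "\<forall>a\<in>range (\<lambda>m. x (B m)). lexle w a"
  \<comment> \<open>\<open>x (B 0) - w\<close> is an upper bound in \<open>Gamma k\<close> of the increasing values \<open>x (B 0 - B m)\<close>.\<close>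
  have upper: "lexle (x (B 0 - B m)) (x (B 0) - w)" for m
  proof -
    have "x (B 0 - B m) = x (B 0) - x (B m)"
      using x_decseq_split(3)[OF borel dec, of m] by (simp add: algebra_simps)
    moreover have "lexle (x (B 0) - x (B m)) (x (B 0) - w)"
      using w(2) lexle_diff_left_iff by blast
    ultimately show ?thesis
      by simp
  qed
  have "lexle 0 (x (B 0) - w)"
    using w(2) lexle_diff_left_iff[of "x (B 0)" "x (B 0)" w] by simp
  moreover have "lexle (x (B 0) - w) (x (B 0))"
    using w(1) lexle_diff_left_iff[of "x (B 0)" w 0] by (simp add: Gamma_iff)
  moreover have "lexle (x (B 0)) (k, 0)"
    using borel x_in_Gamma by (auto simp: Gamma_iff)
  ultimately have "x (B 0) - w \<in> Gamma k"
    by (auto simp: Gamma_iff intro: lexle_trans)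
  moreover have "lex_sup_in (Gamma k) (range (\<lambda>m. x (B 0 - B m))) (x (\<Union>m. B 0 - B m))"
    using x_decseq_split(1,2)[OF borel dec] by (rule x_incseq_Sup)
  ultimately have "lexle (x (\<Union>m. B 0 - B m)) (x (B 0) - w)"
    using upper by (auto simp: lex_sup_in_def)
  then show "lexle w (x (\<Inter>m. B m))"
    using x_decseq_split(4)[OF borel dec] lexle_diff_left_iff[of "x (B 0)" "x (\<Inter>m. B m)" w]
    by (simp add: algebra_simps)
qed

lemma fst_x_decseq_eventually:
  assumes borel: "range B \<subseteq> sets borel" and dec: "decseq B"
  shows "\<exists>N. fst (x (B N)) = fst (x (\<Inter>m. B m))"
proof -
  obtain N where "fst (x (B 0 - B N)) = fst (x (\<Union>m. B 0 - B m))"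
    using fst_x_incseq_eventually[OF x_decseq_split(1,2)[OF borel dec]] by blast
  moreover have "fst (x (B 0)) = fst (x (B N)) + fst (x (B 0 - B N))"
    using x_decseq_split(3)[OF borel dec, of N] by simp
  moreover have "fst (x (B 0)) = fst (x (\<Inter>m. B m)) + fst (x (\<Union>m. B 0 - B m))"
    using x_decseq_split(4)[OF borel dec] by simp
  ultimately show ?thesis
    by (intro exI[of _ N]) linarith
qed

lemma Tset_iff: "v \<in> Tset k x i \<longleftrightarrow> fst (x (lower_orthant v)) = i"
  using x_in_Gamma[OF lower_orthant_borel]
  by (simp add: Tset_def Mset_def distrF_eq_lower_orthant)

lemma char_point_nth: "char_point k x i s $ j = Inf {r. vec_upd s j r \<in> Tset k x i}"
  by (simp add: char_point_def pi_comp_def vec_upd_def)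

lemma vec_upd_in_Tset:
  assumes s: "s \<in> Tset k x i" and "char_point k x i s $ j < c" "c \<le> s $ j"
  shows "vec_upd s j c \<in> Tset k x i"
proof -
  let ?R = "{r. vec_upd s j r \<in> Tset k x i}"
  have "s $ j \<in> ?R"
    using s by simp
  then obtain r where r: "r \<in> ?R" "r < c"
    using cInf_lessD[of ?R c] \<open>s $ j \<in> ?R\<close> assms(2) unfolding char_point_nth by blast
  have "fst (x (lower_orthant (vec_upd s j r))) \<le> fst (x (lower_orthant (vec_upd s j c)))"
    using r(2) by (intro fst_x_mono lower_orthant_mono) (auto simp: vle_def)
  moreover have "fst (x (lower_orthant (vec_upd s j c))) \<le> fst (x (lower_orthant s))"
    using assms(3) by (intro fst_x_mono lower_orthant_mono) (auto simp: vle_def)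
  ultimately show ?thesis
    using r(1) s by (simp add: Tset_iff)
qed

lemma fst_x_lower_orthant_Diff_null:
  assumes s: "s \<in> Tset k x i" and "vll (char_point k x i s) t" "vle t s"
  shows "fst (x (lower_orthant s - lower_orthant t)) = 0"
proof -
  have null: "fst (x (lower_orthant s - lower_orthant (vec_upd s l (t $ l)))) = 0" for l
  proof -
    have "vec_upd s l (t $ l) \<in> Tset k x i"
      by (rule vec_upd_in_Tset[OF s]) (use assms(2,3) in \<open>simp_all add: vll_def vle_def\<close>)
    moreover have "lower_orthant (vec_upd s l (t $ l)) \<subseteq> lower_orthant s"
      using assms(3) by (intro lower_orthant_mono) (simp add: vle_def)
    ultimately show ?thesis
      using s fst_x_Diff[OF _ lower_orthant_borel lower_orthant_borel] by (simp add: Tset_iff)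
  qed
  have "lower_orthant s - lower_orthant (vec_upd s l (t $ l)) \<in> sets borel" for l
    by (intro sets.Diff lower_orthant_borel)
  then show ?thesis
    unfolding lower_orthant_Diff[of s t] using null by (intro fst_x_null_UN) auto
qed

lemma Tset_below:
  assumes "s \<in> Tset k x i" "vll (char_point k x i s) t" "vle t s"
  shows "t \<in> Tset k x i"
proof -
  have "lower_orthant t \<subseteq> lower_orthant s"
    using assms(3) by (rule lower_orthant_mono)
  then show ?thesis
    using fst_x_lower_orthant_Diff_null[OF assms] fst_x_Diff[of "lower_orthant t" "lower_orthant s"] assms(1)
    by (simp add: Tset_iff)
qed

lemma char_point_below:
  assumes s: "s \<in> Tset k x i" and pt: "vll (char_point k x i s) t" and ts: "vle t s"
  shows "char_point k x i t = char_point k x i s"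
proof -
  have t: "t \<in> Tset k x i"
    using Tset_below[OF assms] .
  have same_below: "vec_upd t j r \<in> Tset k x i \<longleftrightarrow> vec_upd s j r \<in> Tset k x i" if "r \<le> t $ j" for j r
  proof -
    have sub: "lower_orthant (vec_upd t j r) \<subseteq> lower_orthant (vec_upd s j r)"
      using ts by (intro lower_orthant_mono) (simp add: vle_def)
    have "r \<le> s $ j"
      using that ts by (auto simp: vle_def intro: order_trans)
    then have "fst (x (lower_orthant (vec_upd s j r) - lower_orthant (vec_upd t j r))) = 0"
      by (intro fst_x_null_subset[OF lower_orthant_vec_upd_Diff_subset])
        (simp_all add: sets.Diff fst_x_lower_orthant_Diff_null[OF assms])
    then show ?thesis
      using fst_x_Diff[OF sub] by (simp add: Tset_iff)
  qed
  have "char_point k x i t $ j = char_point k x i s $ j" for j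
  proof -
    have "t $ j \<in> {r. vec_upd t j r \<in> Tset k x i}" "t $ j \<in> {r. vec_upd s j r \<in> Tset k x i}"
      using t vec_upd_in_Tset[OF s] pt ts by (simp_all add: vll_def vle_def)
    moreover have "{r. vec_upd t j r \<in> Tset k x i} \<inter> {..t $ j} = {r. vec_upd s j r \<in> Tset k x i} \<inter> {..t $ j}"
      using same_below by auto
    ultimately show ?thesis
      unfolding char_point_nth by (metis Inf_real_Int_atMost)
  qed
  then show ?thesis
    by (simp add: vec_eq_iff)
qed

lemma lex_inf_in_box:
  assumes s: "s \<in> Tset k x i" and pt: "vll (char_point k x i s) t" and ts: "vle t s"
  shows "lex_inf_in (Gamma k) (distrF x ` {u. vll (char_point k x i s) u \<and> vle u s})
           (x {..char_point k x i s})"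
    and "x {..char_point k x i s} \<in> Mset k i"
proof -
  define p where "p = char_point k x i s"
  obtain u where pu: "\<And>m. vll p (u m)" and ut: "\<And>m. vle (u m) t"
    and dec: "decseq (\<lambda>m. lower_orthant (u m))" and Inter: "(\<Inter>m. lower_orthant (u m)) = {..p}"
    using lower_orthants_decreasing_to_atMost pt unfolding p_def by blast
  have us: "vle (u m) s" for m
    using ut ts by (auto simp: vle_def intro: order_trans)
  have borel: "range (\<lambda>m. lower_orthant (u m)) \<subseteq> sets borel"
    by auto
  have p_borel: "{..p} \<in> sets borel"
    by (intro borel_closed) simp
  obtain N where "fst (x (lower_orthant (u N))) = fst (x {..p})"
    using fst_x_decseq_eventually[OF borel dec] Inter by auto
  moreover have "u N \<in> Tset k x i"
    using Tset_below[OF s] pu us unfolding p_def by blast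
  ultimately show "x {..char_point k x i s} \<in> Mset k i"
    using x_in_Gamma[OF p_borel] by (simp add: Tset_iff Mset_def p_def)
  have inf: "lex_inf_in (Gamma k) (range (\<lambda>m. x (lower_orthant (u m)))) (x {..p})"
    using x_decseq_Inf[OF borel dec] Inter by simp
  show "lex_inf_in (Gamma k) (distrF x ` {u. vll (char_point k x i s) u \<and> vle u s})
      (x {..char_point k x i s})"
    unfolding lex_inf_in_def p_def[symmetric]
  proof (intro conjI ballI impI)
    show "x {..p} \<in> Gamma k"
      using x_in_Gamma[OF p_borel] .
    fix a assume "a \<in> distrF x ` {v. vll p v \<and> vle v s}"
    then obtain v where "vll p v" "a = x (lower_orthant v)"
      by (auto simp: distrF_eq_lower_orthant)
    then show "lexle (x {..p}) a"
      using p_borel by (simp add: x_mono atMost_subset_lower_orthant)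
  next
    fix w assume w: "w \<in> Gamma k" "\<forall>a\<in>distrF x ` {v. vll p v \<and> vle v s}. lexle w a"
    then have "\<forall>a\<in>range (\<lambda>m. x (lower_orthant (u m))). lexle w a"
      using pu us by (auto simp: distrF_eq_lower_orthant)
    then show "lexle w (x {..p})"
      using inf w(1) by (simp add: lex_inf_in_def)
  qed
qed

end

theorem lemma4p2:
  fixes k i :: int
    and x :: "(real^'n) set \<Rightarrow> int \<times> 'g::lattice_ab_group_add"
    and s t :: "real^'n"
  assumes "k \<ge> 1"
    and "dedekind_sigma_complete TYPE('g)"
    and "observable k x"
    and "1 \<le> i" and "i \<le> k"
    and "s \<in> Tset k x i"
    and "vll (char_point k x i s) t" and "vle t s"
  shows "t \<in> Tset k x i \<and> approx_i k x i t s \<and>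
         is_vinf {u. vll (char_point k x i s) u \<and> vle u s} (char_point k x i s) \<and>
         (\<exists>m. lex_inf_in (Gamma k) (distrF x ` {u. vll (char_point k x i s) u \<and> vle u s}) m
              \<and> m \<in> Mset k i)"
proof -
  interpret lex_observable k x
    by unfold_locales (rule assms(3))
  have "t \<in> Tset k x i"
    using Tset_below[OF assms(6-8)] .
  moreover have "char_point k x i t = char_point k x i s"
    using char_point_below[OF assms(6-8)] .
  moreover have "is_vinf {u. vll (char_point k x i s) u \<and> vle u s} (char_point k x i s)"
    using is_vinf_box[OF assms(7,8)] .
  moreover have "\<exists>m. lex_inf_in (Gamma k) (distrF x ` {u. vll (char_point k x i s) u \<and> vle u s}) m
      \<and> m \<in> Mset k i"
    using lex_inf_in_box[OF assms(6-8)] by blast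
  ultimately show ?thesis
    using assms(6) by (simp add: approx_i_def)
qed

end
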